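(* For every integer $t$, there exists a connected bipartite graph whose adjacency matrix has exactly five distinct eigenvalues and which has at least $t$ distinct valencies (vertex degrees).
   Context: Eigenvalues of a graph are the eigenvalues of its adjacency matrix. Graphs are finite, simple and undirected. *)

theory Defs
  imports "Jordan_Normal_Form.Char_Poly"
begin

definition simple_graph :: "nat \<Rightarrow> (nat \<Rightarrow> nat \<Rightarrow> bool) \<Rightarrow> bool" where
  "simple_graph n E \<longleftrightarrow>
     (\<forall>i j. E i j \<longrightarrow> i < n \<and> j < n) \<and>
     (\<forall>i j. E i j \<longrightarrow> E j i) \<and>
     (\<forall>i. \<not> E i i)"

definition adjacency_matrix :: "nat \<Rightarrow> (nat \<Rightarrow> nat \<Rightarrow> bool) \<Rightarrow> real mat" where
  "adjacency_matrix n E = mat n n (\<lambda>(i, j). if E i j then 1 else 0)"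

definition graph_eigenvalues :: "nat \<Rightarrow> (nat \<Rightarrow> nat \<Rightarrow> bool) \<Rightarrow> real set" where
  "graph_eigenvalues n E = {k. eigenvalue (adjacency_matrix n E) k}"

definition graph_connected :: "nat \<Rightarrow> (nat \<Rightarrow> nat \<Rightarrow> bool) \<Rightarrow> bool" where
  "graph_connected n E \<longleftrightarrow> 0 < n \<and> (\<forall>u<n. \<forall>v<n. E\<^sup>*\<^sup>* u v)"

definition graph_bipartite :: "nat \<Rightarrow> (nat \<Rightarrow> nat \<Rightarrow> bool) \<Rightarrow> bool" where
  "graph_bipartite n E \<longleftrightarrow>
     (\<exists>X. X \<subseteq> {0..<n} \<and> (\<forall>i j. E i j \<longrightarrow> (i \<in> X \<longleftrightarrow> j \<notin> X)))"

definition degree :: "nat \<Rightarrow> (nat \<Rightarrow> nat \<Rightarrow> bool) \<Rightarrow> nat \<Rightarrow> nat" where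
  "degree n E v = card {u. u < n \<and> E v u}"

definition valencies :: "nat \<Rightarrow> (nat \<Rightarrow> nat \<Rightarrow> bool) \<Rightarrow> nat set" where
  "valencies n E = degree n E ` {0..<n}"

end

theory Submission
  imports Defs
begin

text \<open>Take the incidence graph between the points \<open>{0,\<dots>,m-1}\<close> and all nonempty subsets
of them. Its biadjacency matrix \<open>N\<close> satisfies \<open>N N\<^sup>T = 2\<^sup>m\<^sup>-\<^sup>2 (I + J)\<close>, since two distinct
points lie in \<open>2\<^sup>m\<^sup>-\<^sup>2\<close> common subsets and one point in \<open>2\<^sup>m\<^sup>-\<^sup>1\<close>. The nonzero eigenvalues
of a bipartite graph are the square roots \<open>\<plusminus>\<surd>\<mu>\<close> of the nonzero eigenvalues \<open>\<mu>\<close> of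
\<open>N N\<^sup>T\<close>, here \<open>2\<^sup>m\<^sup>-\<^sup>2\<close> and \<open>(m+1) 2\<^sup>m\<^sup>-\<^sup>2\<close>; together with \<open>0\<close> (the columns of \<open>N\<close> for
\<open>{0}\<close>, \<open>{1}\<close> and \<open>{0,1}\<close> are dependent) this gives five eigenvalues. The subsets \<open>{0,\<dots>,k-1}\<close> have valency \<open>k\<close>, so
there are at least \<open>m\<close> valencies.\<close>

lemma sum_lessThan_add_split:
  fixes f :: "nat \<Rightarrow> 'a::comm_monoid_add"
  shows "(\<Sum>j<m + l. f j) = (\<Sum>j<m. f j) + (\<Sum>p<l. f (m + p))"
proof -
  have "(\<Sum>j<m + l. f j) = (\<Sum>j<m. f j) + (\<Sum>j\<in>{m..<m + l}. f j)"
    by (simp add: lessThan_atLeast0 sum.atLeastLessThan_concat)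
  also have "(\<Sum>j\<in>{m..<m + l}. f j) = (\<Sum>p<l. f (m + p))"
    using sum.shift_bounds_nat_ivl[of f 0 m l] by (simp add: atLeast0LessThan add.commute)
  finally show ?thesis .
qed

lemma card_supsets:
  assumes "finite A" "B \<subseteq> A"
  shows "card {S. S \<subseteq> A \<and> B \<subseteq> S} = 2 ^ (card A - card B)"
proof -
  have "bij_betw (\<lambda>S. S - B) {S. S \<subseteq> A \<and> B \<subseteq> S} (Pow (A - B))"
    by (rule bij_betw_byWitness[where f'="\<lambda>T. T \<union> B"]) (use assms in auto)
  then have "card {S. S \<subseteq> A \<and> B \<subseteq> S} = card (Pow (A - B))"
    by (rule bij_betw_same_card)
  also have "\<dots> = 2 ^ (card A - card B)"
    using assms by (simp add: card_Pow card_Diff_subset finite_subset)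
  finally show ?thesis .
qed

lemma adjacency_matrix_mult_vec_nth:
  assumes "dim_vec v = n" "i < n"
  shows "(adjacency_matrix n E *\<^sub>v v) $ i = (\<Sum>j<n. if E i j then v $ j else 0)"
  using assms by (auto simp: adjacency_matrix_def scalar_prod_def lessThan_atLeast0 intro: sum.cong)

locale incidence_graph =
  fixes m L :: nat and g :: "nat \<Rightarrow> nat set"
begin

text \<open>Vertices \<open>i < m\<close> are points, vertex \<open>m + p\<close> is the block \<open>g p\<close> for \<open>p < L\<close>,
and a point is adjacent to the blocks containing it.\<close>

definition n :: nat where "n = m + L"

definition E :: "nat \<Rightarrow> nat \<Rightarrow> bool" where
  "E i j \<longleftrightarrow> (i < m \<and> m \<le> j \<and> j < m + L \<and> i \<in> g (j - m)) \<or>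
             (j < m \<and> m \<le> i \<and> i < m + L \<and> j \<in> g (i - m))"

abbreviation A :: "real mat" where "A \<equiv> adjacency_matrix n E"

definition gram :: "(nat \<Rightarrow> real) \<Rightarrow> nat \<Rightarrow> real" where
  "gram x i = (\<Sum>p<L. if i \<in> g p then (\<Sum>j<m. if j \<in> g p then x j else 0) else 0)"

lemma E_point_block [simp]: "i < m \<Longrightarrow> p < L \<Longrightarrow> E i (m + p) \<longleftrightarrow> i \<in> g p"
  and E_block_point [simp]: "i < m \<Longrightarrow> p < L \<Longrightarrow> E (m + p) i \<longleftrightarrow> i \<in> g p"
  by (auto simp: E_def)

lemma simple_graph: "simple_graph n E"
  unfolding simple_graph_def E_def n_def by auto

lemma bipartite: "graph_bipartite n E"
  unfolding graph_bipartite_def by (rule exI[of _ "{0..<m}"]) (auto simp: E_def n_def)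

lemma vertex_cases [case_names point block]:
  assumes "i < n"
  obtains "i < m" | p where "i = m + p" "p < L"
  using assms unfolding n_def by (metis add_less_cancel_left le_Suc_ex not_less)

lemma vec_eq_by_vertices:
  assumes "dim_vec u = n" "dim_vec w = n"
    and "\<And>i. i < m \<Longrightarrow> u $ i = w $ i" "\<And>p. p < L \<Longrightarrow> u $ (m + p) = w $ (m + p)"
  shows "u = w"
proof (rule eq_vecI)
  fix i assume "i < dim_vec w"
  with assms(2) have "i < n" by simp
  then show "u $ i = w $ i"
    by (cases rule: vertex_cases) (use assms(3,4) in auto)
qed (use assms in simp)

lemma mult_vec_point:
  assumes "dim_vec v = n" "i < m"
  shows "(A *\<^sub>v v) $ i = (\<Sum>p<L. if i \<in> g p then v $ (m + p) else 0)"
proof -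
  have "(A *\<^sub>v v) $ i = (\<Sum>j<m + L. if E i j then v $ j else 0)"
    using assms adjacency_matrix_mult_vec_nth[of v n i E] by (simp add: n_def)
  also have "\<dots> = (\<Sum>p<L. if i \<in> g p then v $ (m + p) else 0)"
    using assms(2) by (simp add: sum_lessThan_add_split E_def)
  finally show ?thesis .
qed

lemma mult_vec_block:
  assumes "dim_vec v = n" "p < L"
  shows "(A *\<^sub>v v) $ (m + p) = (\<Sum>j<m. if j \<in> g p then v $ j else 0)"
proof -
  have "(A *\<^sub>v v) $ (m + p) = (\<Sum>j<m + L. if E (m + p) j then v $ j else 0)"
    using assms adjacency_matrix_mult_vec_nth[of v n "m + p" E] by (simp add: n_def)
  also have "\<dots> = (\<Sum>j<m. if j \<in> g p then v $ j else 0)"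
    using assms(2) by (auto simp: sum_lessThan_add_split E_def intro: sum.cong)
  finally show ?thesis .
qed

lemma dim_row_A [simp]: "dim_row A = n"
  by (simp add: adjacency_matrix_def)

lemma eigenvalue_A_iff: "eigenvalue A k \<longleftrightarrow> (\<exists>v. dim_vec v = n \<and> v \<noteq> 0\<^sub>v n \<and> A *\<^sub>v v = k \<cdot>\<^sub>v v)"
  unfolding eigenvalue_def eigenvector_def dim_row_A by (metis carrier_vec_dim_vec carrier_vecD)

lemma eigenvalue_imp_gram_eigenvalue:
  assumes "eigenvalue A k" "k \<noteq> 0"
  shows "\<exists>x. (\<exists>i<m. x i \<noteq> 0) \<and> (\<forall>i<m. gram x i = k\<^sup>2 * x i)"
proof -
  obtain v where dv: "dim_vec v = n" and v0: "v \<noteq> 0\<^sub>v n" and ev: "A *\<^sub>v v = k \<cdot>\<^sub>v v"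
    using assms(1) eigenvalue_A_iff by blast
  have block: "k * v $ (m + p) = (\<Sum>j<m. if j \<in> g p then v $ j else 0)" if "p < L" for p
    using mult_vec_block[OF dv that] ev dv that by (simp add: n_def)
  have point: "k * v $ i = (\<Sum>p<L. if i \<in> g p then v $ (m + p) else 0)" if "i < m" for i
    using mult_vec_point[OF dv that] ev dv that by (simp add: n_def)
  define x where "x i = v $ i" for i
  have "gram x i = k\<^sup>2 * x i" if "i < m" for i
  proof -
    have "gram x i = (\<Sum>p<L. if i \<in> g p then k * v $ (m + p) else 0)"
      unfolding gram_def x_def by (rule sum.cong) (simp_all add: block)
    also have "\<dots> = k * (\<Sum>p<L. if i \<in> g p then v $ (m + p) else 0)"
      by (auto simp: sum_distrib_left intro: sum.cong)
    also have "\<dots> = k * (k * v $ i)"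
      by (simp add: point[OF that])
    finally show ?thesis by (simp add: x_def power2_eq_square)
  qed
  moreover have "\<exists>i<m. x i \<noteq> 0"
  proof (rule ccontr)
    assume "\<not> (\<exists>i<m. x i \<noteq> 0)"
    then have points: "v $ i = 0" if "i < m" for i
      using that by (simp add: x_def)
    have "v = 0\<^sub>v n"
    proof (rule vec_eq_by_vertices)
      fix p assume "p < L"
      then have "k * v $ (m + p) = 0"
        by (auto simp: block points intro!: sum.neutral)
      with \<open>p < L\<close> assms(2) show "v $ (m + p) = 0\<^sub>v n $ (m + p)"
        by (simp add: n_def)
    qed (use dv points in \<open>auto simp: n_def\<close>)
    with v0 show False ..
  qed
  ultimately show ?thesis by blast
qed

lemma gram_eigenvalue_imp_eigenvalue:
  assumes "k \<noteq> 0" "i0 < m" "x i0 \<noteq> 0" and gram_x: "\<And>i. i < m \<Longrightarrow> gram x i = k\<^sup>2 * x i"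
  shows "eigenvalue A k"
proof -
  define T where "T p = (\<Sum>j<m. if j \<in> g p then x j else 0)" for p
  define v where "v = vec n (\<lambda>i. if i < m then x i else T (i - m) / k)"
  have dv: "dim_vec v = n" by (simp add: v_def)
  have "A *\<^sub>v v = k \<cdot>\<^sub>v v"
  proof (rule vec_eq_by_vertices)
    fix i assume i: "i < m"
    have "(A *\<^sub>v v) $ i = (\<Sum>p<L. if i \<in> g p then T p / k else 0)"
      unfolding mult_vec_point[OF dv i] by (rule sum.cong) (simp_all add: v_def n_def)
    also have "\<dots> = (\<Sum>p<L. (if i \<in> g p then T p else 0) / k)"
      by (rule sum.cong) auto
    also have "\<dots> = gram x i / k"
      unfolding gram_def T_def by (rule sum_divide_distrib[symmetric])
    finally show "(A *\<^sub>v v) $ i = (k \<cdot>\<^sub>v v) $ i"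
      using i dv assms(1) gram_x[OF i] by (simp add: v_def n_def power2_eq_square)
  next
    fix p assume p: "p < L"
    have "(A *\<^sub>v v) $ (m + p) = T p"
      unfolding mult_vec_block[OF dv p] T_def by (rule sum.cong) (simp_all add: v_def n_def)
    then show "(A *\<^sub>v v) $ (m + p) = (k \<cdot>\<^sub>v v) $ (m + p)"
      using p dv assms(1) by (simp add: v_def n_def)
  qed (simp_all add: dv)
  moreover have "v \<noteq> 0\<^sub>v n"
    using assms(2,3) by (auto simp: v_def n_def dest: arg_cong[where f="\<lambda>u. u $ i0"])
  ultimately show ?thesis
    using dv eigenvalue_A_iff by blast
qed

lemma zero_eigenvalueI:
  fixes w :: "nat \<Rightarrow> real"
  assumes "p0 < L" "w p0 \<noteq> 0" and null: "\<And>i. i < m \<Longrightarrow> (\<Sum>p<L. if i \<in> g p then w p else 0) = 0"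
  shows "eigenvalue A 0"
proof -
  define v where "v = vec n (\<lambda>i. if i < m then 0 else w (i - m))"
  have dv: "dim_vec v = n" by (simp add: v_def)
  have "A *\<^sub>v v = 0 \<cdot>\<^sub>v v"
  proof (rule vec_eq_by_vertices)
    fix i assume i: "i < m"
    have "(A *\<^sub>v v) $ i = (\<Sum>p<L. if i \<in> g p then w p else 0)"
      unfolding mult_vec_point[OF dv i] by (rule sum.cong) (simp_all add: v_def n_def)
    then show "(A *\<^sub>v v) $ i = (0 \<cdot>\<^sub>v v) $ i"
      using i dv null[OF i] by (simp add: n_def)
  next
    fix p assume p: "p < L"
    have "(A *\<^sub>v v) $ (m + p) = 0"
      unfolding mult_vec_block[OF dv p] by (rule sum.neutral) (simp add: v_def n_def)
    then show "(A *\<^sub>v v) $ (m + p) = (0 \<cdot>\<^sub>v v) $ (m + p)"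
      using p dv by (simp add: n_def)
  qed (simp_all add: dv)
  moreover have "v \<noteq> 0\<^sub>v n"
    using assms(1,2) by (auto simp: v_def n_def dest: arg_cong[where f="\<lambda>u. u $ (m + p0)"])
  ultimately show ?thesis
    using dv eigenvalue_A_iff by blast
qed

lemma degree_block: "p < L \<Longrightarrow> degree n E (m + p) = card (g p \<inter> {..<m})"
  unfolding degree_def by (rule arg_cong[where f=card]) (auto simp: E_def n_def)

lemma connected_if_full_block:
  assumes "0 < m" "p0 < L" "{..<m} \<subseteq> g p0" and meets: "\<And>p. p < L \<Longrightarrow> g p \<inter> {..<m} \<noteq> {}"
  shows "graph_connected n E"
proof -
  have to_hub: "E\<^sup>*\<^sup>* u (m + p0)" if "u < n" for u
    using that
  proof (cases rule: vertex_cases)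
    case point
    with assms(2,3) have "E u (m + p0)" by auto
    then show ?thesis ..
  next
    case (block p)
    with meets obtain i where "i \<in> g p" "i < m" by blast
    with block assms(2,3) have "E u i" "E i (m + p0)" by auto
    then show ?thesis by (meson r_into_rtranclp converse_rtranclp_into_rtranclp)
  qed
  have "symp E\<^sup>*\<^sup>*"
    by (rule symp_rtranclp) (auto simp: symp_def E_def)
  then have "E\<^sup>*\<^sup>* u v" if "u < n" "v < n" for u v
    using to_hub[OF that(1)] to_hub[OF that(2)] by (meson rtranclp_trans sympD)
  with assms(1) show ?thesis
    unfolding graph_connected_def n_def by simp
qed

end

locale subset_graph = incidence_graph +
  assumes two_le_m: "2 \<le> m"
    and blocks_enum: "bij_betw g {..<L} (Pow {..<m} - {{}})"
begin

definition c :: real where "c = 2 ^ (m - 2)"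

lemma c_pos: "0 < c"
  by (simp add: c_def)

lemma block_subset: "p < L \<Longrightarrow> g p \<subseteq> {..<m}"
  and block_nonempty: "p < L \<Longrightarrow> g p \<noteq> {}"
  using bij_betwE[OF blocks_enum] by auto

lemma block_exists: "S \<subseteq> {..<m} \<Longrightarrow> S \<noteq> {} \<Longrightarrow> \<exists>p<L. g p = S"
proof -
  assume "S \<subseteq> {..<m}" "S \<noteq> {}"
  then have "S \<in> g ` {..<L}"
    using bij_betw_imp_surj_on[OF blocks_enum] by blast
  then show ?thesis by auto
qed

lemma card_blocks_containing:
  assumes "i < m" "j < m"
  shows "card {p. p < L \<and> i \<in> g p \<and> j \<in> g p} = 2 ^ (m - card {i, j})"
proof -
  let ?P = "{p. p < L \<and> i \<in> g p \<and> j \<in> g p}"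
  have "g ` ?P = {S. S \<subseteq> {..<m} \<and> {i, j} \<subseteq> S}"
  proof
    show "g ` ?P \<subseteq> {S. S \<subseteq> {..<m} \<and> {i, j} \<subseteq> S}"
      using block_subset by auto
    show "{S. S \<subseteq> {..<m} \<and> {i, j} \<subseteq> S} \<subseteq> g ` ?P"
    proof
      fix S assume S: "S \<in> {S. S \<subseteq> {..<m} \<and> {i, j} \<subseteq> S}"
      then obtain p where "p < L" "g p = S"
        using block_exists[of S] by auto
      with S show "S \<in> g ` ?P" by auto
    qed
  qed
  moreover have "inj_on g ?P"
    using bij_betw_imp_inj_on[OF blocks_enum] by (rule inj_on_subset) auto
  ultimately have "card ?P = card {S. S \<subseteq> {..<m} \<and> {i, j} \<subseteq> S}"
    using card_image by fastforce
  also have "\<dots> = 2 ^ (m - card {i, j})"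
    using assms by (subst card_supsets) auto
  finally show ?thesis .
qed

lemma gram_eq:
  assumes "i < m"
  shows "gram x i = c * (x i + (\<Sum>j<m. x j))"
proof -
  have "gram x i = (\<Sum>p<L. \<Sum>j<m. if i \<in> g p \<and> j \<in> g p then x j else 0)"
    unfolding gram_def by (rule sum.cong) auto
  also have "\<dots> = (\<Sum>j<m. \<Sum>p<L. if i \<in> g p \<and> j \<in> g p then x j else 0)"
    by (rule sum.swap)
  also have "\<dots> = (\<Sum>j<m. card {p. p < L \<and> i \<in> g p \<and> j \<in> g p} * x j)"
  proof (rule sum.cong)
    fix j
    have "(\<Sum>p<L. if i \<in> g p \<and> j \<in> g p then x j else 0) = (\<Sum>p\<in>{p. p < L \<and> i \<in> g p \<and> j \<in> g p}. x j)"
      by (simp add: sum.inter_filter[symmetric] lessThan_def Collect_conj_eq[symmetric] conj_commute)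
    then show "(\<Sum>p<L. if i \<in> g p \<and> j \<in> g p then x j else 0) = card {p. p < L \<and> i \<in> g p \<and> j \<in> g p} * x j"
      by simp
  qed simp
  also have "\<dots> = (\<Sum>j<m. c * (x j + (if j = i then x j else 0)))"
  proof (rule sum.cong)
    fix j assume "j \<in> {..<m}"
    moreover obtain l where "m = l + 2"
      using two_le_m by (metis add.commute le_Suc_ex)
    then have "(2::real) ^ (m - 1) = 2 * 2 ^ (m - 2)"
      by simp
    ultimately show "card {p. p < L \<and> i \<in> g p \<and> j \<in> g p} * x j
        = c * (x j + (if j = i then x j else 0))"
      using assms by (auto simp: card_blocks_containing c_def)
  qed simp
  also have "\<dots> = c * (\<Sum>j<m. x j + (if j = i then x j else 0))"
    by (simp add: sum_distrib_left)
  also have "(\<Sum>j<m. x j + (if j = i then x j else 0)) = x i + (\<Sum>j<m. x j)"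
    using assms by (simp add: sum.distrib)
  finally show ?thesis .
qed

lemma nonzero_eigenvalue_square:
  assumes "eigenvalue A k" "k \<noteq> 0"
  shows "k\<^sup>2 = c \<or> k\<^sup>2 = (real m + 1) * c"
proof -
  obtain x i0 where i0: "i0 < m" "x i0 \<noteq> 0" and gram_x: "\<And>i. i < m \<Longrightarrow> gram x i = k\<^sup>2 * x i"
    using eigenvalue_imp_gram_eigenvalue[OF assms] by blast
  define S where "S = (\<Sum>j<m. x j)"
  have eq: "k\<^sup>2 * x i = c * (x i + S)" if "i < m" for i
    using gram_x[OF that] gram_eq[OF that] by (simp add: S_def)
  show ?thesis
  proof (cases "S = 0")
    case True
    then have "k\<^sup>2 = c"
      using eq[OF i0(1)] i0(2) by simp
    then show ?thesis ..
  next
    case False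
    have "k\<^sup>2 * S = (\<Sum>i<m. c * (x i + S))"
      unfolding S_def sum_distrib_left by (rule sum.cong) (simp_all add: eq[unfolded S_def])
    also have "\<dots> = ((real m + 1) * c) * S"
      by (simp add: S_def sum.distrib sum_distrib_left algebra_simps)
    finally have "k\<^sup>2 = (real m + 1) * c"
      using False by simp
    then show ?thesis ..
  qed
qed

lemma eigenvalue_if_square_eq_c:
  assumes "k\<^sup>2 = c"
  shows "eigenvalue A k"
proof -
  define x :: "nat \<Rightarrow> real" where "x i = (if i = 0 then 1 else if i = 1 then -1 else 0)" for i
  have "(\<Sum>j<m. x j) = 0"
    using two_le_m by (simp add: x_def sum.If_cases lessThan_def)
  then show ?thesis
    using assms two_le_m
    by (intro gram_eigenvalue_imp_eigenvalue[of k 0 x]) (auto simp: gram_eq x_def c_def)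
qed

lemma eigenvalue_if_square_eq_Suc_m_c:
  assumes "k\<^sup>2 = (real m + 1) * c"
  shows "eigenvalue A k"
proof -
  have "k \<noteq> 0"
    using assms c_pos by auto
  then show ?thesis
    using assms two_le_m
    by (intro gram_eigenvalue_imp_eigenvalue[of k 0 "\<lambda>_. 1"]) (auto simp: gram_eq algebra_simps)
qed

lemma eigenvalue_zero: "eigenvalue A 0"
proof -
  have "{0, 1} \<subseteq> {..<m}"
    using two_le_m by auto
  then obtain p1 p2 p3 where p: "p1 < L" "g p1 = {0}" "p2 < L" "g p2 = {1}" "p3 < L" "g p3 = {0, 1}"
    using block_exists[of "{0}"] block_exists[of "{1}"] block_exists[of "{0, 1}"] by auto
  then have distinct: "p1 \<noteq> p2" "p1 \<noteq> p3" "p2 \<noteq> p3" by auto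
  define w :: "nat \<Rightarrow> real" where
    "w p = (if p = p1 \<or> p = p2 then 1 else if p = p3 then -1 else 0)" for p
  show ?thesis
  proof (rule zero_eigenvalueI[of p1 w])
    fix i assume "i < m"
    have "(\<Sum>p<L. if i \<in> g p then w p else 0) = (\<Sum>p\<in>{p1, p2, p3}. if i \<in> g p then w p else 0)"
      by (rule sum.mono_neutral_right) (use p in \<open>auto simp: w_def\<close>)
    also have "\<dots> = 0"
      using p distinct by (simp add: w_def)
    finally show "(\<Sum>p<L. if i \<in> g p then w p else 0) = 0" .
  qed (use p in \<open>simp_all add: w_def\<close>)
qed

lemma eigenvalues_eq:
  "graph_eigenvalues n E =
    {0, sqrt c, - sqrt c,
     sqrt ((real m + 1) * c), - sqrt ((real m + 1) * c)}"
proof (intro equalityI subsetI)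
  fix k assume "k \<in> graph_eigenvalues n E"
  then consider "k = 0" | "\<bar>k\<bar> = sqrt c" | "\<bar>k\<bar> = sqrt ((real m + 1) * c)"
    unfolding graph_eigenvalues_def using nonzero_eigenvalue_square
    by (metis mem_Collect_eq real_sqrt_abs)
  then show "k \<in> {0, sqrt c, - sqrt c,
      sqrt ((real m + 1) * c), - sqrt ((real m + 1) * c)}"
    by cases (auto split: abs_split)
next
  fix k assume "k \<in> {0, sqrt c, - sqrt c,
      sqrt ((real m + 1) * c), - sqrt ((real m + 1) * c)}"
  then show "k \<in> graph_eigenvalues n E"
    unfolding graph_eigenvalues_def
    using eigenvalue_zero eigenvalue_if_square_eq_c eigenvalue_if_square_eq_Suc_m_c c_pos by auto
qed

lemma card_eigenvalues: "card (graph_eigenvalues n E) = 5"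
proof -
  have "card {0, a, - a, b, - b} = 5" if "0 < a" "a < b" for a b :: real
    using that by simp
  moreover have "0 < sqrt c" "sqrt c < sqrt ((real m + 1) * c)"
    using two_le_m c_pos by simp_all
  ultimately show ?thesis
    unfolding eigenvalues_eq by blast
qed

lemma m_le_card_valencies: "m \<le> card (valencies n E)"
proof -
  have "{1..m} \<subseteq> valencies n E"
  proof
    fix d assume "d \<in> {1..m}"
    then have "{..<d} \<subseteq> {..<m}" "{..<d} \<noteq> {}"
      by (auto simp: lessThan_empty_iff)
    then obtain p where p: "p < L" "g p = {..<d}"
      using block_exists by blast
    then have "degree n E (m + p) = d"
      using block_subset[OF p(1)] by (simp add: degree_block Int_absorb2)
    with p(1) show "d \<in> valencies n E"
      unfolding valencies_def n_def by force
  qed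
  then show ?thesis
    using card_mono[of "valencies n E" "{1..m}"] by (simp add: valencies_def)
qed

lemma connected: "graph_connected n E"
proof -
  obtain p0 where "p0 < L" "g p0 = {..<m}"
    using block_exists[of "{..<m}"] two_le_m by (auto simp: lessThan_empty_iff)
  then show ?thesis
    using two_le_m block_subset block_nonempty
    by (intro connected_if_full_block[of p0]) (auto simp: Int_absorb2)
qed

end

theorem theorem1:
  fixes t :: int
  shows "\<exists>n E. simple_graph n E \<and> graph_connected n E \<and> graph_bipartite n E \<and>
           card (graph_eigenvalues n E) = 5 \<and> int (card (valencies n E)) \<ge> t"
proof -
  define m where "m = max 2 (nat t)"
  have "finite (Pow {..<m} - {{}})" by simp
  then obtain g where "bij_betw g {..<card (Pow {..<m} - {{}})} (Pow {..<m} - {{}})"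
    by (metis ex_bij_betw_nat_finite lessThan_atLeast0)
  then interpret subset_graph m "card (Pow {..<m} - {{}})" g
    by unfold_locales (simp_all add: m_def)
  have "t \<le> int (card (valencies n E))"
    using m_le_card_valencies unfolding m_def by linarith
  then show ?thesis
    using simple_graph connected bipartite card_eigenvalues by blast
qed

end
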